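(* Let $a<b$, $\alpha,\beta\in(0,1)$, $y_a,y_b\in\mathbb R$, $F\in C^1([a,b]\times\mathbb R^3;\mathbb R)$. Let $y\in C^1([a,b];\mathbb R)$ be a solution (minimizer or maximizer) of $$\mathcal J(y)={}_aI_b^\alpha\big[t\mapsto F(t,y(t),y'(t),{}^C_aD_t^\beta[y](t))\big](b)$$ over functions $y\in C^1([a,b])$ with ${}^C_aD_t^\beta[y]$ continuous on $[a,b]$ and $y(a)=y_a$, $y(b)=y_b$. Write $[y](t)=(t,y(t),y'(t),{}^C_aD_t^\beta[y](t))$ and $g(t)=(b-t)^{\alpha-1}\partial_4F([y](t))$. Assume $g$ has a continuous right Riemann–Liouville derivative ${}_tD_b^\beta[g]$ on $(a,b)$, that $t\mapsto(b-t)^{\alpha-1}\partial_2F([y](t))$ and $t\mapsto\frac{d}{dt}\{(b-t)^{\alpha-1}\partial_3F([y](t))\}$ are continuous on $(a,b)$, that $t\mapsto(b-t)^{\alpha-1}\partial_3F([y](t))$ and ${}_tI_b^{1-\beta}[g]$ are absolutely continuous on $[a,b]$, and that either the kernel $(t,\tau)\mapsto(t-\tau)^{-\beta}/\Gamma(1-\beta)$ is square integrable on $\{a\le\tau<t\le b\}$ and $g\in L_2([a,b])$, or $g$ is continuous on $[a,b]$. Then for all $t\in(a,b)$, $$\partial_2F([y](t))(b-t)^{\alpha-1}-\frac{d}{dt}\Big\{\partial_3F([y](t))(b-t)^{\alpha-1}\Big\}+{}_tD_b^\beta\big[\tau\mapsto(b-\tau)^{\alpha-1}\partial_4F([y](\tau))\big](t)=0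 .$$
   Context: $\partial_iF$ denotes the partial derivative of $F$ in its $i$-th argument. For $\mu\in(0,1)$: ${}_aI_t^\mu[f](t)=\frac1{\Gamma(\mu)}\int_a^t(t-\tau)^{\mu-1}f(\tau)d\tau$, ${}_tI_b^\mu[f](t)=\frac1{\Gamma(\mu)}\int_t^b(\tau-t)^{\mu-1}f(\tau)d\tau$, right Riemann–Liouville derivative ${}_tD_b^\mu[f](t)=-\frac{d}{dt}{}_tI_b^{1-\mu}[f](t)$, left Caputo derivative ${}^C_aD_t^\mu[f](t)={}_aI_t^{1-\mu}[f'](t)$. The notation ${}_aI_b^\alpha[h](b)$ means $\frac1{\Gamma(\alpha)}\int_a^b(b-t)^{\alpha-1}h(t)dt$. *)

theory Defs
  imports "HOL-Analysis.Analysis"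
begin

definition lRL_int :: "real \<Rightarrow> real \<Rightarrow> (real \<Rightarrow> real) \<Rightarrow> real \<Rightarrow> real" where
  "lRL_int a mu f t = (1 / Gamma mu) * integral {a..t} (\<lambda>\<tau>. (t - \<tau>) powr (mu - 1) * f \<tau>)"

definition rRL_int :: "real \<Rightarrow> real \<Rightarrow> (real \<Rightarrow> real) \<Rightarrow> real \<Rightarrow> real" where
  "rRL_int b mu f t = (1 / Gamma mu) * integral {t..b} (\<lambda>\<tau>. (\<tau> - t) powr (mu - 1) * f \<tau>)"

definition rRL_deriv :: "real \<Rightarrow> real \<Rightarrow> (real \<Rightarrow> real) \<Rightarrow> real \<Rightarrow> real" where
  "rRL_deriv b mu f t = - deriv (rRL_int b (1 - mu) f) t"

definition dI :: "real \<Rightarrow> real \<Rightarrow> (real \<Rightarrow> real) \<Rightarrow> real \<Rightarrow> real" where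
  "dI a b y t = vector_derivative y (at t within {a..b})"

definition C1_on :: "real \<Rightarrow> real \<Rightarrow> (real \<Rightarrow> real) \<Rightarrow> bool" where
  "C1_on a b y \<longleftrightarrow> (\<forall>t\<in>{a..b}. y differentiable (at t within {a..b})) \<and> continuous_on {a..b} (dI a b y)"

definition caputo :: "real \<Rightarrow> real \<Rightarrow> real \<Rightarrow> (real \<Rightarrow> real) \<Rightarrow> real \<Rightarrow> real" where
  "caputo a b mu y t = lRL_int a (1 - mu) (dI a b y) t"

definition Jfun :: "real \<Rightarrow> real \<Rightarrow> real \<Rightarrow> real \<Rightarrow> (real \<Rightarrow> real \<Rightarrow> real \<Rightarrow> real \<Rightarrow> real)
    \<Rightarrow> (real \<Rightarrow> real) \<Rightarrow> real" where
  "Jfun a b alpha beta F y =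
     lRL_int a alpha (\<lambda>t. F t (y t) (dI a b y t) (caputo a b beta y t)) b"

definition admissible :: "real \<Rightarrow> real \<Rightarrow> real \<Rightarrow> real \<Rightarrow> real \<Rightarrow> (real \<Rightarrow> real) \<Rightarrow> bool" where
  "admissible a b beta ya yb y \<longleftrightarrow>
     C1_on a b y \<and> continuous_on {a..b} (caputo a b beta y) \<and> y a = ya \<and> y b = yb"

definition abs_cont_on :: "real \<Rightarrow> real \<Rightarrow> (real \<Rightarrow> real) \<Rightarrow> bool" where
  "abs_cont_on a b f \<longleftrightarrow>
     (\<forall>\<epsilon>>0. \<exists>\<delta>>0. \<forall>(n::nat) (c::nat \<Rightarrow> real) d.
        (\<forall>i<n. a \<le> c i \<and> c i \<le> d i \<and> d i \<le> b) \<and>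
        (\<forall>i<n. \<forall>j<n. i \<noteq> j \<longrightarrow> d i \<le> c j \<or> d j \<le> c i) \<and>
        (\<Sum>i<n. d i - c i) < \<delta> \<longrightarrow>
        (\<Sum>i<n. \<bar>f (d i) - f (c i)\<bar>) < \<epsilon>)"

end

theory Submission
  imports Defs
begin

(* Perturb the extremal y by e * eta with a C^1 bump eta supported in [c, d], a < c < d < b.
   These variations are admissible, and the Caputo derivative of eta is the left
   Riemann-Liouville integral of eta'. Differentiating J(y + e * eta) at e = 0 under the
   integral sign (dominated convergence against the integrable weight (b - t) powr (alpha - 1))
   makes the first variation vanish. Its eta' term is integrated by parts; its Caputo term is
   first moved onto eta' by Fubini's theorem for the Abel kernel (fractional integration by
   parts) and then integrated by parts as well. So the Euler-Lagrange expression, which is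
   continuous on (a, b), integrates to zero against every such bump and therefore vanishes. *)

section \<open>Abel kernels\<close>

lemma has_integral_reflect_Icc:
  fixes f :: "real \<Rightarrow> real"
  shows "(f has_integral I) {a..t} \<longleftrightarrow> ((\<lambda>s. f (t - s)) has_integral I) {0..t - a}"
proof -
  have "((\<lambda>s. f (t - s)) has_integral I) {0..t - a} \<longleftrightarrow>
        ((\<lambda>s. f (t + s)) has_integral I) {a - t..0}"
    using has_integral_reflect_real[where f = "\<lambda>s. f (t + s)" and i = I and a = "a - t" and b = 0]
    by simp
  also have "\<dots> \<longleftrightarrow> (f has_integral I) {a..t}"
    using has_integral_shift_Icc_real[of f t I "a - t" 0] by (simp add: o_def add.commute)
  finally show ?thesis ..
qed

lemma integral_reflect_Icc:
  fixes f :: "real \<Rightarrow> real"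
  shows "integral {a..t} f = integral {0..t - a} (\<lambda>s. f (t - s))"
  using has_integral_reflect_Icc[of f _ a t]
  by (metis integrable_integral integrable_on_def integral_unique not_integrable_integral)

lemma has_integral_Abel_kernel:
  fixes mu a t :: real
  assumes "0 < mu" "a \<le> t"
  shows "((\<lambda>\<tau>. (t - \<tau>) powr (mu - 1)) has_integral (t - a) powr mu / mu) {a..t}"
  using has_integral_powr_from_0[of "mu - 1" "t - a"] assms
  by (subst has_integral_reflect_Icc) simp

lemma absolutely_integrable_nonneg_times_continuous:
  fixes k G :: "real \<Rightarrow> real"
  assumes "k integrable_on {a..b}" "\<And>x. x \<in> {a..b} \<Longrightarrow> 0 \<le> k x" "continuous_on {a..b} G"
  shows "(\<lambda>x. k x * G x) absolutely_integrable_on {a..b}"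
proof -
  have "(\<lambda>x. G x * k x) absolutely_integrable_on {a..b}"
  proof (rule absolutely_integrable_bounded_measurable_product_real)
    show "G \<in> borel_measurable (lebesgue_on {a..b})"
      using assms(3) by (intro continuous_imp_measurable_on_sets_lebesgue) auto
    show "bounded (G ` {a..b})"
      using assms(3) compact_continuous_image compact_imp_bounded by blast
    show "k absolutely_integrable_on {a..b}"
      using assms by (intro nonnegative_absolutely_integrable_1)
  qed auto
  then show ?thesis by (simp add: mult.commute)
qed

lemma Abel_kernel_times_continuous_absolutely_integrable:
  fixes phi :: "real \<Rightarrow> real"
  assumes "0 < mu" "continuous_on {a..b} phi" "t \<le> b"
  shows "(\<lambda>\<tau>. (t - \<tau>) powr (mu - 1) * phi \<tau>) absolutely_integrable_on {a..t}"
proof (cases "a \<le> t")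
  case True
  then show ?thesis
    using assms has_integral_Abel_kernel[of mu a t]
    by (intro absolutely_integrable_nonneg_times_continuous)
       (auto intro: continuous_on_subset)
qed simp

lemma Abel_integral_bounded:
  fixes phi :: "real \<Rightarrow> real"
  assumes mu: "0 < mu" and phi: "continuous_on {a..b} phi"
  obtains C where "\<And>t. t \<in> {a..b} \<Longrightarrow> integral {a..t} (\<lambda>\<tau>. (t - \<tau>) powr (mu - 1) * \<bar>phi \<tau>\<bar>) \<le> C"
proof -
  obtain M where M: "\<And>x. x \<in> {a..b} \<Longrightarrow> \<bar>phi x\<bar> \<le> M"
    using compact_imp_bounded[OF compact_continuous_image[OF phi compact_Icc]]
    unfolding bounded_iff by (metis atLeastAtMost_iff imageI real_norm_def)
  have "integral {a..t} (\<lambda>\<tau>. (t - \<tau>) powr (mu - 1) * \<bar>phi \<tau>\<bar>) \<le> (b - a) powr mu / mu * M"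
    if t: "t \<in> {a..b}" for t
  proof -
    have kernel: "((\<lambda>\<tau>. (t - \<tau>) powr (mu - 1)) has_integral (t - a) powr mu / mu) {a..t}"
      using t mu by (intro has_integral_Abel_kernel) auto
    have "integral {a..t} (\<lambda>\<tau>. (t - \<tau>) powr (mu - 1) * \<bar>phi \<tau>\<bar>) \<le> integral {a..t} (\<lambda>\<tau>. (t - \<tau>) powr (mu - 1) * M)"
    proof (rule integral_le)
      have "continuous_on {a..t} (\<lambda>\<tau>. \<bar>phi \<tau>\<bar>)"
        using t by (intro continuous_intros continuous_on_subset[OF phi]) auto
      then show "(\<lambda>\<tau>. (t - \<tau>) powr (mu - 1) * \<bar>phi \<tau>\<bar>) integrable_on {a..t}"
        using absolutely_integrable_nonneg_times_continuous[OF has_integral_integrable[OF kernel]]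
        by (simp add: absolutely_integrable_on_def)
      show "(\<lambda>\<tau>. (t - \<tau>) powr (mu - 1) * M) integrable_on {a..t}"
        using kernel by (intro integrable_on_mult_left) blast
    next
      fix x assume "x \<in> {a..t}"
      with M[of x] t show "(t - x) powr (mu - 1) * \<bar>phi x\<bar> \<le> (t - x) powr (mu - 1) * M"
        by (intro mult_left_mono) auto
    qed
    also have "\<dots> = (t - a) powr mu / mu * M"
      using kernel by (simp add: integral_unique)
    also have "\<dots> \<le> (b - a) powr mu / mu * M"
      using t mu M[of t] by (intro mult_right_mono divide_right_mono powr_mono2) auto
    finally show ?thesis .
  qed
  then show thesis by (rule that)
qed

lemma continuous_on_Abel_convolution:
  fixes phi :: "real \<Rightarrow> real"
  assumes mu: "0 < mu" and phi: "continuous_on UNIV phi" and L: "0 \<le> L"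
  shows "continuous_on {a..b} (\<lambda>t. integral {0..L} (\<lambda>s. s powr (mu - 1) * phi (t - s)))"
proof (rule continuous_on_sequentiallyI)
  have kernel: "(\<lambda>s. s powr (mu - 1)) integrable_on {0..L}"
    using mu L by (intro integrable_on_powr_from_0) auto
  obtain M where M: "\<And>x. x \<in> {a - L..b} \<Longrightarrow> \<bar>phi x\<bar> \<le> M"
    using compact_imp_bounded[OF compact_continuous_image[OF continuous_on_subset[OF phi] compact_Icc]]
    unfolding bounded_iff by (metis atLeastAtMost_iff imageI real_norm_def subset_UNIV)
  have shifted: "continuous_on S (\<lambda>s. phi (t - s))" for S t
    by (rule continuous_on_compose2[OF phi]) (auto intro!: continuous_intros)
  fix u t0 assume u: "\<forall>n. u n \<in> {a..b}" and lim: "u \<longlonglongrightarrow> t0"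
  show "(\<lambda>n. integral {0..L} (\<lambda>s. s powr (mu - 1) * phi (u n - s)))
      \<longlonglongrightarrow> integral {0..L} (\<lambda>s. s powr (mu - 1) * phi (t0 - s))"
  proof (rule dominated_convergence(2))
    show "(\<lambda>s. s powr (mu - 1) * phi (u n - s)) integrable_on {0..L}" for n
      using absolutely_integrable_nonneg_times_continuous[OF kernel _ shifted]
      by (simp add: absolutely_integrable_on_def)
    show "(\<lambda>s. s powr (mu - 1) * M) integrable_on {0..L}"
      using kernel by (rule integrable_on_mult_left)
  next
    fix n s assume s: "s \<in> {0..L}"
    have "u n - s \<in> {a - L..b}" using u[rule_format, of n] s by auto
    then show "norm (s powr (mu - 1) * phi (u n - s)) \<le> s powr (mu - 1) * M"
      using M by (auto simp: abs_mult intro!: mult_left_mono)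
  next
    fix s
    show "(\<lambda>n. s powr (mu - 1) * phi (u n - s)) \<longlonglongrightarrow> s powr (mu - 1) * phi (t0 - s)"
      using lim by (intro tendsto_intros continuous_on_tendsto_compose[OF phi]) auto
  qed
qed

lemma continuous_on_Abel_integral:
  fixes phi :: "real \<Rightarrow> real"
  assumes mu: "0 < mu" and phi: "continuous_on UNIV phi"
    and phi_0: "\<And>\<tau>. \<tau> \<le> a \<Longrightarrow> phi \<tau> = 0"
  shows "continuous_on {a..b} (\<lambda>t. integral {a..t} (\<lambda>\<tau>. (t - \<tau>) powr (mu - 1) * phi \<tau>))"
proof (cases "a \<le> b")
  case True
  \<comment> \<open>As phi vanishes left of a, the integral may be taken over the fixed interval [0, b - a].\<close>
  have "integral {a..t} (\<lambda>\<tau>. (t - \<tau>) powr (mu - 1) * phi \<tau>)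
      = integral {0..b - a} (\<lambda>s. s powr (mu - 1) * phi (t - s))" if t: "t \<in> {a..b}" for t
  proof -
    have "continuous_on {0..b - a} (\<lambda>s. phi (t - s))"
      by (rule continuous_on_compose2[OF phi]) (auto intro!: continuous_intros)
    moreover have "(\<lambda>s. s powr (mu - 1)) integrable_on {0..b - a}"
      using mu True by (intro integrable_on_powr_from_0) auto
    ultimately have "(\<lambda>s. s powr (mu - 1) * phi (t - s)) integrable_on {0..b - a}"
      using absolutely_integrable_nonneg_times_continuous[of "\<lambda>s. s powr (mu - 1)" 0 "b - a"]
      by (simp add: absolutely_integrable_on_def)
    then have "integral {0..t - a} (\<lambda>s. s powr (mu - 1) * phi (t - s))
        + integral {t - a..b - a} (\<lambda>s. s powr (mu - 1) * phi (t - s))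
        = integral {0..b - a} (\<lambda>s. s powr (mu - 1) * phi (t - s))"
      using t by (intro Henstock_Kurzweil_Integration.integral_combine) auto
    moreover have "integral {t - a..b - a} (\<lambda>s. s powr (mu - 1) * phi (t - s)) = 0"
      using phi_0 by (subst integral_cong[where g = "\<lambda>_. 0"]) auto
    ultimately show ?thesis
      by (simp add: integral_reflect_Icc[of a t])
  qed
  with continuous_on_Abel_convolution[OF mu phi, of "b - a" a b] True show ?thesis
    by (auto elim: continuous_on_eq)
qed simp

section \<open>Dirichlet's formula and fractional integration by parts\<close>

lemma integral_lborel_indicator_eq_integral:
  fixes f :: "real \<Rightarrow> real"
  assumes "f absolutely_integrable_on S" "(\<lambda>x. indicator S x * f x) \<in> borel_measurable borel"
  shows "integrable lborel (\<lambda>x. indicator S x * f x)"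
    "integral\<^sup>L lborel (\<lambda>x. indicator S x * f x) = integral S f"
proof -
  have "integrable lebesgue (\<lambda>x. indicator S x * f x)"
    using assms(1) by (simp add: set_integrable_def)
  moreover have "(\<lambda>x. indicator S x * f x) \<in> borel_measurable lborel"
    using assms(2) by simp
  ultimately show "integrable lborel (\<lambda>x. indicator S x * f x)"
    using integrable_completion by blast
  then show "integral\<^sup>L lborel (\<lambda>x. indicator S x * f x) = integral S f"
    using set_borel_integral_eq_integral(2)[of S f]
    by (simp add: set_integrable_def set_lebesgue_integral_def)
qed

lemma integral_lborel_AE_eq_integral:
  fixes f h :: "real \<Rightarrow> real"
  assumes f: "integrable lborel f" "f \<in> borel_measurable borel"
    and ae: "AE x in lborel. f x = indicator S x * h x"
  shows "integral\<^sup>L lborel f = integral S h"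
proof -
  let ?h = "\<lambda>x. indicator S x * h x"
  have f_meas: "f \<in> borel_measurable lebesgue" using f(2) by (simp add: measurable_completion)
  have ae': "AE x in lebesgue. f x = ?h x" using ae by (rule AE_completion)
  have h_meas: "?h \<in> borel_measurable lebesgue" by (rule borel_measurable_AE[OF f_meas ae'])
  have "integrable lebesgue f" using f integrable_completion[of f lborel] by simp
  then have h_int: "integrable lebesgue ?h" using integrable_cong_AE[OF f_meas h_meas ae'] by simp
  have "integral\<^sup>L lborel f = integral\<^sup>L lebesgue f" using f(2) by (simp add: integral_completion)
  also have "\<dots> = integral\<^sup>L lebesgue ?h" by (rule integral_cong_AE[OF f_meas h_meas ae'])
  also have "\<dots> = integral S h"
    using set_lebesgue_integral_eq_integral(2)[of S h] h_int
    by (simp add: set_integrable_def set_lebesgue_integral_def)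
  finally show ?thesis .
qed

lemma integral_lborel_indicator_times_const:
  fixes f :: "real \<Rightarrow> real"
  assumes "integrable lborel (\<lambda>x. indicator S x * f x * c)" "(\<lambda>x. indicator S x * f x) \<in> borel_measurable borel"
  shows "(\<integral>x. indicator S x * f x * c \<partial>lborel) = integral S f * c"
proof (cases "c = 0")
  case False
  then have "integrable lborel (\<lambda>x. indicator S x * f x)"
    using integrable_mult_left[OF assms(1), of "inverse c"] by simp
  then show ?thesis
    using integral_lborel_AE_eq_integral[OF _ assms(2)] by simp
qed simp

lemma Abel_kernel_product_measurable:
  fixes phi g :: "real \<Rightarrow> real"
  assumes phi: "phi \<in> borel_measurable borel" and g: "g \<in> borel_measurable borel"
  shows "(\<lambda>(t, \<tau>). indicator {(t, \<tau>). a \<le> \<tau> \<and> \<tau> \<le> t \<and> t \<le> b} (t, \<tau>) * ((t - \<tau>) powr (mu - 1) * phi \<tau> * g t))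
    \<in> borel_measurable (lborel \<Otimes>\<^sub>M lborel)"
proof -
  have "{(t :: real, \<tau> :: real). a \<le> \<tau> \<and> \<tau> \<le> t \<and> t \<le> b}
      = {p. a \<le> snd p} \<inter> {p. snd p \<le> fst p} \<inter> {p. fst p \<le> b}"
    by auto
  also have "closed \<dots>"
    by (intro closed_Int closed_Collect_le continuous_intros)
  finally have "indicator {(t :: real, \<tau> :: real). a \<le> \<tau> \<and> \<tau> \<le> t \<and> t \<le> b} \<in> borel_measurable borel"
    by (intro borel_measurable_indicator) (simp add: borel_closed)
  moreover have "(\<lambda>p :: real \<times> real. (fst p - snd p) powr (mu - 1)) \<in> borel_measurable borel"
    by (intro powr_real_measurable borel_measurable_continuous_onI continuous_intros)
  moreover have "(\<lambda>p :: real \<times> real. phi (snd p)) \<in> borel_measurable borel"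
    by (rule measurable_compose[OF _ phi]) (intro borel_measurable_continuous_onI continuous_intros)
  moreover have "(\<lambda>p :: real \<times> real. g (fst p)) \<in> borel_measurable borel"
    by (rule measurable_compose[OF _ g]) (intro borel_measurable_continuous_onI continuous_intros)
  ultimately have "(\<lambda>p :: real \<times> real. indicator {(t, \<tau>). a \<le> \<tau> \<and> \<tau> \<le> t \<and> t \<le> b} p
      * ((fst p - snd p) powr (mu - 1) * phi (snd p) * g (fst p))) \<in> borel_measurable borel"
    by (intro borel_measurable_times)
  moreover have "sets (lborel \<Otimes>\<^sub>M lborel) = sets (borel :: (real \<times> real) measure)"
    by (metis borel_prod sets_lborel sets_pair_measure_cong)
  ultimately show ?thesis
    by (simp add: case_prod_beta' cong: measurable_cong_sets)
qed

lemma integral_lborel_Abel_section: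
  fixes phi :: "real \<Rightarrow> real"
  assumes mu: "0 < mu" and phi: "continuous_on UNIV phi" and t: "t \<in> {a..b}"
  shows "integrable lborel (\<lambda>\<tau>. indicator {a..t} \<tau> * ((t - \<tau>) powr (mu - 1) * phi \<tau>))"
    "(\<integral>\<tau>. indicator {a..t} \<tau> * ((t - \<tau>) powr (mu - 1) * phi \<tau>) \<partial>lborel)
      = integral {a..t} (\<lambda>\<tau>. (t - \<tau>) powr (mu - 1) * phi \<tau>)"
proof -
  have [measurable]: "phi \<in> borel_measurable borel"
    using phi by (rule borel_measurable_continuous_onI)
  have "(\<lambda>\<tau>. (t - \<tau>) powr (mu - 1) * phi \<tau>) absolutely_integrable_on {a..t}"
    using t by (intro Abel_kernel_times_continuous_absolutely_integrable mu)
      (auto intro: continuous_on_subset[OF phi])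
  moreover have "(\<lambda>\<tau>. indicator {a..t} \<tau> * ((t - \<tau>) powr (mu - 1) * phi \<tau>)) \<in> borel_measurable borel"
    by measurable
  ultimately show "integrable lborel (\<lambda>\<tau>. indicator {a..t} \<tau> * ((t - \<tau>) powr (mu - 1) * phi \<tau>))"
    "(\<integral>\<tau>. indicator {a..t} \<tau> * ((t - \<tau>) powr (mu - 1) * phi \<tau>) \<partial>lborel)
      = integral {a..t} (\<lambda>\<tau>. (t - \<tau>) powr (mu - 1) * phi \<tau>)"
    by (rule integral_lborel_indicator_eq_integral)+
qed

lemma Abel_kernel_product_integrable:
  fixes phi g :: "real \<Rightarrow> real"
  assumes mu: "0 < mu" and phi: "continuous_on UNIV phi"
    and g: "g \<in> borel_measurable borel" "g absolutely_integrable_on {a..b}"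
  shows "integrable (lborel \<Otimes>\<^sub>M lborel)
    (\<lambda>(t, \<tau>). indicator {(t, \<tau>). a \<le> \<tau> \<and> \<tau> \<le> t \<and> t \<le> b} (t, \<tau>) * ((t - \<tau>) powr (mu - 1) * phi \<tau> * g t))"
proof -
  define K where "K = (\<lambda>t \<tau>. indicator {(t, \<tau>). a \<le> \<tau> \<and> \<tau> \<le> t \<and> t \<le> b} (t, \<tau>)
    * ((t - \<tau>) powr (mu - 1) * phi \<tau> * g t))"
  have K_meas: "case_prod K \<in> borel_measurable (lborel \<Otimes>\<^sub>M lborel)"
    unfolding K_def using borel_measurable_continuous_onI[OF phi] g(1)
    by (rule Abel_kernel_product_measurable)
  have K_section: "K t = (\<lambda>\<tau>. indicator {a..t} \<tau> * ((t - \<tau>) powr (mu - 1) * phi \<tau>) * (indicator {a..b} t * g t))"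
    and abs_K: "\<bar>K t \<tau>\<bar> = indicator {a..t} \<tau> * ((t - \<tau>) powr (mu - 1) * \<bar>phi \<tau>\<bar>) * (indicator {a..b} t * \<bar>g t\<bar>)"
    for t \<tau>
    by (auto simp: K_def indicator_def abs_mult fun_eq_iff)
  have abs_phi: "continuous_on UNIV (\<lambda>\<tau>. \<bar>phi \<tau>\<bar>)"
    using phi by (intro continuous_intros)
  obtain C where C: "\<And>t. t \<in> {a..b} \<Longrightarrow> integral {a..t} (\<lambda>\<tau>. (t - \<tau>) powr (mu - 1) * \<bar>phi \<tau>\<bar>) \<le> C"
    using Abel_integral_bounded[OF mu continuous_on_subset[OF phi]] by blast
  have section_bound: "norm (\<integral>\<tau>. norm (K t \<tau>) \<partial>lborel) \<le> norm (\<bar>C\<bar> * (indicator {a..b} t * g t))" for t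
  proof (cases "t \<in> {a..b}")
    case True
    have "(\<integral>\<tau>. norm (K t \<tau>) \<partial>lborel) = integral {a..t} (\<lambda>\<tau>. (t - \<tau>) powr (mu - 1) * \<bar>phi \<tau>\<bar>) * \<bar>g t\<bar>"
      using True integral_lborel_Abel_section(2)[OF mu abs_phi True] by (simp add: abs_K)
    moreover have "0 \<le> (\<integral>\<tau>. norm (K t \<tau>) \<partial>lborel)"
      by (rule integral_nonneg_AE) simp
    ultimately have "norm (\<integral>\<tau>. norm (K t \<tau>) \<partial>lborel)
        = integral {a..t} (\<lambda>\<tau>. (t - \<tau>) powr (mu - 1) * \<bar>phi \<tau>\<bar>) * \<bar>g t\<bar>"
      by simp
    also have "\<dots> \<le> C * \<bar>g t\<bar>"
      using C[OF True] by (rule mult_right_mono) simp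
    also have "\<dots> \<le> norm (\<bar>C\<bar> * (indicator {a..b} t * g t))"
      using True by (simp add: abs_mult mult_right_mono)
    finally show ?thesis .
  qed (simp add: abs_K)
  have "integrable lborel (\<lambda>t. \<integral>\<tau>. norm (K t \<tau>) \<partial>lborel)"
  proof (rule Bochner_Integration.integrable_bound)
    show "integrable lborel (\<lambda>t. \<bar>C\<bar> * (indicator {a..b} t * g t))"
      using integral_lborel_indicator_eq_integral(1)[OF g(2)] g(1) by simp
    show "(\<lambda>t. \<integral>\<tau>. norm (K t \<tau>) \<partial>lborel) \<in> borel_measurable lborel"
      using K_meas by measurable
  qed (rule AE_I2[OF section_bound])
  moreover have "AE t in lborel. integrable lborel (K t)"
  proof (rule AE_I2)
    fix t
    show "integrable lborel (K t)"
      using integral_lborel_Abel_section(1)[OF mu phi, of t a b]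
      unfolding K_section by (cases "t \<in> {a..b}") simp_all
  qed
  ultimately show ?thesis
    using lborel_pair.Fubini_integrable[of "case_prod K"] K_meas unfolding K_def by auto
qed

lemma Dirichlet_formula_Abel_kernel:
  fixes phi g :: "real \<Rightarrow> real"
  assumes mu: "0 < mu" and phi: "continuous_on UNIV phi"
    and g: "g \<in> borel_measurable borel" "g absolutely_integrable_on {a..b}"
  shows "integral {a..b} (\<lambda>t. g t * integral {a..t} (\<lambda>\<tau>. (t - \<tau>) powr (mu - 1) * phi \<tau>))
       = integral {a..b} (\<lambda>\<tau>. phi \<tau> * integral {\<tau>..b} (\<lambda>t. (t - \<tau>) powr (mu - 1) * g t))"
proof -
  define K where "K = (\<lambda>t \<tau>. indicator {(t, \<tau>). a \<le> \<tau> \<and> \<tau> \<le> t \<and> t \<le> b} (t, \<tau>)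
    * ((t - \<tau>) powr (mu - 1) * phi \<tau> * g t))"
  have phi_meas[measurable]: "phi \<in> borel_measurable borel"
    using phi by (rule borel_measurable_continuous_onI)
  have g_meas[measurable]: "g \<in> borel_measurable borel" by (fact g(1))
  have K_int: "integrable (lborel \<Otimes>\<^sub>M lborel) (case_prod K)"
    unfolding K_def by (rule Abel_kernel_product_integrable[OF mu phi g])
  then have K_meas[measurable]: "case_prod K \<in> borel_measurable (lborel \<Otimes>\<^sub>M lborel)"
    by (rule borel_measurable_integrable)
  have "(\<integral>t. (\<integral>\<tau>. K t \<tau> \<partial>lborel) \<partial>lborel)
      = integral {a..b} (\<lambda>t. g t * integral {a..t} (\<lambda>\<tau>. (t - \<tau>) powr (mu - 1) * phi \<tau>))"
  proof (rule integral_lborel_AE_eq_integral)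
    show "integrable lborel (\<lambda>t. \<integral>\<tau>. K t \<tau> \<partial>lborel)"
      by (rule lborel_pair.integrable_fst[OF K_int])
    show "(\<lambda>t. \<integral>\<tau>. K t \<tau> \<partial>lborel) \<in> borel_measurable borel"
      by measurable
    show "AE t in lborel. (\<integral>\<tau>. K t \<tau> \<partial>lborel)
        = indicator {a..b} t * (g t * integral {a..t} (\<lambda>\<tau>. (t - \<tau>) powr (mu - 1) * phi \<tau>))"
    proof (rule AE_I2)
      fix t
      have K_t: "K t = (\<lambda>\<tau>. indicator {a..t} \<tau> * ((t - \<tau>) powr (mu - 1) * phi \<tau>) * (indicator {a..b} t * g t))"
        by (auto simp: K_def indicator_def fun_eq_iff)
      show "(\<integral>\<tau>. K t \<tau> \<partial>lborel)
          = indicator {a..b} t * (g t * integral {a..t} (\<lambda>\<tau>. (t - \<tau>) powr (mu - 1) * phi \<tau>))"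
        using integral_lborel_Abel_section(2)[OF mu phi, of t a b]
        unfolding K_t by (cases "t \<in> {a..b}") simp_all
    qed
  qed
  moreover have "(\<integral>\<tau>. (\<integral>t. K t \<tau> \<partial>lborel) \<partial>lborel)
      = integral {a..b} (\<lambda>\<tau>. phi \<tau> * integral {\<tau>..b} (\<lambda>t. (t - \<tau>) powr (mu - 1) * g t))"
  proof (rule integral_lborel_AE_eq_integral)
    show "integrable lborel (\<lambda>\<tau>. \<integral>t. K t \<tau> \<partial>lborel)"
      by (rule lborel_pair.integrable_snd[OF K_int])
    show "(\<lambda>\<tau>. \<integral>t. K t \<tau> \<partial>lborel) \<in> borel_measurable borel"
      by measurable
    show "AE \<tau> in lborel. (\<integral>t. K t \<tau> \<partial>lborel)
        = indicator {a..b} \<tau> * (phi \<tau> * integral {\<tau>..b} (\<lambda>t. (t - \<tau>) powr (mu - 1) * g t))"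
      using lborel_pair.AE_integrable_snd[OF K_int]
    proof eventually_elim
      fix \<tau> assume K_int_\<tau>: "integrable lborel (\<lambda>t. K t \<tau>)"
      have K_\<tau>: "(\<lambda>t. K t \<tau>)
          = (\<lambda>t. indicator {\<tau>..b} t * ((t - \<tau>) powr (mu - 1) * g t) * (indicator {a..b} \<tau> * phi \<tau>))"
        by (auto simp: K_def indicator_def fun_eq_iff)
      have "(\<integral>t. K t \<tau> \<partial>lborel)
          = integral {\<tau>..b} (\<lambda>t. (t - \<tau>) powr (mu - 1) * g t) * (indicator {a..b} \<tau> * phi \<tau>)"
        using K_int_\<tau> unfolding K_\<tau> by (rule integral_lborel_indicator_times_const) measurable
      then show "(\<integral>t. K t \<tau> \<partial>lborel)
          = indicator {a..b} \<tau> * (phi \<tau> * integral {\<tau>..b} (\<lambda>t. (t - \<tau>) powr (mu - 1) * g t))"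
        by (simp add: mult_ac)
    qed
  qed
  ultimately show ?thesis
    using lborel_pair.Fubini_integral[OF K_int] by simp
qed

lemma lRL_int_integration_by_parts:
  fixes phi g :: "real \<Rightarrow> real"
  assumes "0 < mu" "continuous_on UNIV phi" "g \<in> borel_measurable borel" "g absolutely_integrable_on {a..b}"
  shows "integral {a..b} (\<lambda>t. g t * lRL_int a mu phi t) = integral {a..b} (\<lambda>\<tau>. phi \<tau> * rRL_int b mu g \<tau>)"
  using Dirichlet_formula_Abel_kernel[OF assms]
  unfolding lRL_int_def rRL_int_def by (simp add: mult.left_commute[of _ "1 / Gamma mu"])

section \<open>Differentiation under the integral sign\<close>

lemma has_real_derivative_weighted_parametric_integral:
  fixes w :: "real \<Rightarrow> real" and psi D :: "real \<Rightarrow> real \<Rightarrow> real"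
  assumes w: "w integrable_on {a..b}" "\<And>t. t \<in> {a..b} \<Longrightarrow> 0 \<le> w t"
    and psi_cont: "\<And>e. continuous_on {a..b} (\<lambda>t. psi t e)"
    and psi_deriv: "\<And>t e. t \<in> {a..b} \<Longrightarrow> (psi t has_real_derivative D t e) (at e)"
    and D_bound: "\<And>t e. t \<in> {a..b} \<Longrightarrow> e \<in> {-1..1} \<Longrightarrow> \<bar>D t e\<bar> \<le> B"
  shows "((\<lambda>e. integral {a..b} (\<lambda>t. w t * psi t e)) has_real_derivative
           integral {a..b} (\<lambda>t. w t * D t 0)) (at 0)"
proof -
  define I where "I = (\<lambda>e. integral {a..b} (\<lambda>t. w t * psi t e))"
  have int: "(\<lambda>t. w t * psi t e) integrable_on {a..b}" for e
    using absolutely_integrable_nonneg_times_continuous[OF w psi_cont]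
    by (simp add: absolutely_integrable_on_def)
  have quotient_bound: "\<bar>(psi t e - psi t 0) / e\<bar> \<le> B" if t: "t \<in> {a..b}" and e: "e \<in> {-1..1}" for t e
  proof -
    have "\<bar>psi t e - psi t 0\<bar> \<le> B * \<bar>e - 0\<bar>"
      using field_differentiable_bound[of "{-1..1}" "psi t" "D t" B e 0] e
        psi_deriv[OF t] D_bound[OF t]
      by (auto simp: has_field_derivative_at_within)
    moreover have "0 \<le> B" using D_bound[OF t, of 0] by simp
    ultimately show ?thesis by (cases "e = 0") (auto simp: divide_le_eq)
  qed
  have quotient: "(I e - I 0) / (e - 0) = integral {a..b} (\<lambda>t. w t * ((psi t e - psi t 0) / e))" for e
  proof -
    have "(I e - I 0) / e = integral {a..b} (\<lambda>t. (w t * psi t e - w t * psi t 0) / e)"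
      unfolding I_def by (simp only: integral_divide integral_diff[OF int int])
    then show ?thesis by (simp add: right_diff_distrib)
  qed
  have lim: "((\<lambda>e. (I e - I 0) / (e - 0)) \<longlongrightarrow> integral {a..b} (\<lambda>t. w t * D t 0)) (at 0 within {-1..1})"
  proof (unfold tendsto_at_iff_sequentially, intro allI impI)
    fix X :: "nat \<Rightarrow> real" assume X: "\<forall>n. X n \<in> {-1..1} - {0}" and "X \<longlonglongrightarrow> 0"
    then have X_at: "filterlim X (at 0) sequentially" by (intro filterlim_atI) auto
    show "((\<lambda>e. (I e - I 0) / (e - 0)) \<circ> X) \<longlonglongrightarrow> integral {a..b} (\<lambda>t. w t * D t 0)"
      unfolding o_def quotient
    proof (rule dominated_convergence(2))
      show "(\<lambda>t. w t * ((psi t (X n) - psi t 0) / X n)) integrable_on {a..b}" for n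
        using integrable_on_divide[OF integrable_diff[OF int int]] by (simp add: right_diff_distrib)
      show "(\<lambda>t. w t * B) integrable_on {a..b}"
        using w(1) by (rule integrable_on_mult_left)
    next
      fix n t assume t: "t \<in> {a..b}"
      show "norm (w t * ((psi t (X n) - psi t 0) / X n)) \<le> w t * B"
        using mult_left_mono[OF quotient_bound[OF t] w(2)[OF t], of "X n"] X w(2)[OF t]
        by (simp add: abs_mult)
    next
      fix t assume t: "t \<in> {a..b}"
      have "((\<lambda>e. (psi t e - psi t 0) / e) \<longlongrightarrow> D t 0) (at 0)"
        using psi_deriv[OF t, of 0] by (simp add: DERIV_def)
      then show "(\<lambda>n. w t * ((psi t (X n) - psi t 0) / X n)) \<longlonglongrightarrow> w t * D t 0"
        by (intro tendsto_mult_left filterlim_compose[OF _ X_at])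
    qed
  qed
  have "at (0 :: real) within {-1..1} = at 0"
    by (intro at_within_interior) auto
  with lim show ?thesis
    unfolding has_field_derivative_iff I_def by (simp only:)
qed

lemma has_real_derivative_along_vertical_line:
  fixes Fp F1 F2 F3 F4 :: "real \<times> real \<times> real \<times> real \<Rightarrow> real"
    and p :: "real \<times> real \<times> real \<times> real" and s h2 h3 h4 :: real
  assumes Fp_deriv: "\<And>q. q \<in> S \<times> UNIV \<Longrightarrow>
      (Fp has_derivative (\<lambda>(k1, k2, k3, k4). F1 q * k1 + F2 q * k2 + F3 q * k3 + F4 q * k4))
      (at q within S \<times> UNIV)"
    and p: "fst p \<in> S"
  defines "q \<equiv> p + s *\<^sub>R (0, h2, h3, h4)"
  shows "((\<lambda>s. Fp (p + s *\<^sub>R (0, h2, h3, h4))) has_real_derivative F2 q * h2 + F3 q * h3 + F4 q * h4) (at s)"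
proof -
  have on_line: "p + s *\<^sub>R (0, h2, h3, h4) \<in> S \<times> UNIV" for s
    using p by (cases p) auto
  have "((\<lambda>s. p + s *\<^sub>R (0, h2, h3, h4)) has_derivative (\<lambda>k. k *\<^sub>R (0, h2, h3, h4))) (at s within UNIV)"
    by (auto intro!: derivative_eq_intros)
  from has_derivative_in_compose2[OF Fp_deriv _ UNIV_I this] on_line
  have "((\<lambda>s. Fp (p + s *\<^sub>R (0, h2, h3, h4))) has_derivative
      (\<lambda>k. (\<lambda>(k1, k2, k3, k4). F1 q * k1 + F2 q * k2 + F3 q * k3 + F4 q * k4) (k *\<^sub>R (0, h2, h3, h4)))) (at s)"
    unfolding q_def by blast
  then show ?thesis
    unfolding has_field_derivative_def
    by (rule has_derivative_eq_rhs) (simp add: fun_eq_iff algebra_simps)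
qed

lemma weighted_integral_first_variation_eq_0:
  fixes Fp F1 F2 F3 F4 :: "real \<times> real \<times> real \<times> real \<Rightarrow> real"
    and P :: "real \<Rightarrow> real \<times> real \<times> real \<times> real" and w h2 h3 h4 :: "real \<Rightarrow> real"
  assumes w: "w integrable_on {a..b}" "\<And>t. t \<in> {a..b} \<Longrightarrow> 0 \<le> w t"
    and Fp_deriv: "\<And>q. q \<in> {a..b} \<times> UNIV \<Longrightarrow>
        (Fp has_derivative (\<lambda>(k1, k2, k3, k4). F1 q * k1 + F2 q * k2 + F3 q * k3 + F4 q * k4))
        (at q within {a..b} \<times> UNIV)"
    and F_cont: "continuous_on ({a..b} \<times> UNIV) F2" "continuous_on ({a..b} \<times> UNIV) F3"
      "continuous_on ({a..b} \<times> UNIV) F4"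
    and P: "continuous_on {a..b} P" "\<And>t. fst (P t) = t"
    and h: "continuous_on {a..b} h2" "continuous_on {a..b} h3" "continuous_on {a..b} h4"
    and extremal:
      "(\<forall>e. integral {a..b} (\<lambda>t. w t * Fp (P t))
          \<le> integral {a..b} (\<lambda>t. w t * Fp (P t + e *\<^sub>R (0, h2 t, h3 t, h4 t)))) \<or>
       (\<forall>e. integral {a..b} (\<lambda>t. w t * Fp (P t))
          \<ge> integral {a..b} (\<lambda>t. w t * Fp (P t + e *\<^sub>R (0, h2 t, h3 t, h4 t))))"
  shows "integral {a..b} (\<lambda>t. w t * (F2 (P t) * h2 t + F3 (P t) * h3 t + F4 (P t) * h4 t)) = 0"
proof -
  define H where "H = (\<lambda>t. (0 :: real, h2 t, h3 t, h4 t))"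
  define Q where "Q = (\<lambda>t s. P t + s *\<^sub>R H t)"
  define D where "D = (\<lambda>t s. F2 (Q t s) * h2 t + F3 (Q t s) * h3 t + F4 (Q t s) * h4 t)"
  define I where "I = (\<lambda>e. integral {a..b} (\<lambda>t. w t * Fp (Q t e)))"
  have Q_dom: "Q t s \<in> {a..b} \<times> UNIV" if "t \<in> {a..b}" for t s
    using that P(2)[of t] unfolding Q_def H_def by (cases "P t") auto
  have H_cont: "continuous_on {a..b} H"
    unfolding H_def using h by (intro continuous_intros)
  have Q_cont: "continuous_on ({a..b} \<times> S) (\<lambda>p. Q (fst p) (snd p))" for S
  proof -
    have "continuous_on ({a..b} \<times> S) (\<lambda>p. P (fst p))" "continuous_on ({a..b} \<times> S) (\<lambda>p. H (fst p))"
      by (auto intro!: continuous_on_compose2[OF P(1)] continuous_on_compose2[OF H_cont] continuous_intros)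
    then show ?thesis unfolding Q_def by (intro continuous_intros)
  qed
  have F_Q_cont: "continuous_on ({a..b} \<times> S) (\<lambda>p. Fi (Q (fst p) (snd p)))"
    if "continuous_on ({a..b} \<times> UNIV) Fi" for Fi S
    by (rule continuous_on_compose2[OF that Q_cont]) (rule image_subsetI, rule Q_dom, auto)
  have psi_deriv: "((\<lambda>s. Fp (Q t s)) has_real_derivative D t s) (at s)" if "t \<in> {a..b}" for t s
    using has_real_derivative_along_vertical_line[OF Fp_deriv, of "P t"] P(2)[of t] that
    unfolding Q_def H_def D_def by simp
  obtain B where B: "\<And>t s. t \<in> {a..b} \<Longrightarrow> s \<in> {-1..1} \<Longrightarrow> \<bar>D t s\<bar> \<le> B"
  proof -
    have h_cont: "continuous_on ({a..b} \<times> {-1..1}) (\<lambda>p. hi (fst p))"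
      if "continuous_on {a..b} hi" for hi :: "real \<Rightarrow> real"
      by (rule continuous_on_compose2[OF that]) (auto intro!: continuous_intros)
    have "continuous_on ({a..b} \<times> {-1..1}) (\<lambda>p. D (fst p) (snd p))"
      unfolding D_def using F_Q_cont[OF F_cont(1)] F_Q_cont[OF F_cont(2)] F_Q_cont[OF F_cont(3)]
        h_cont[OF h(1)] h_cont[OF h(2)] h_cont[OF h(3)]
      by (intro continuous_intros)
    then have "bounded ((\<lambda>p. D (fst p) (snd p)) ` ({a..b} \<times> {-1..1}))"
      by (intro compact_imp_bounded compact_continuous_image compact_Times compact_Icc)
    then show thesis
      using that unfolding bounded_iff by force
  qed
  have Fp_cont: "continuous_on ({a..b} \<times> UNIV) Fp"
    using Fp_deriv has_derivative_continuous continuous_on_eq_continuous_within by blast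
  have psi_cont: "continuous_on {a..b} (\<lambda>t. Fp (Q t e))" for e
  proof -
    have "continuous_on {a..b} (\<lambda>t. Q t e)"
      unfolding Q_def using P(1) H_cont by (intro continuous_intros)
    then show ?thesis
      by (rule continuous_on_compose2[OF Fp_cont]) (rule image_subsetI, rule Q_dom)
  qed
  have "(I has_real_derivative integral {a..b} (\<lambda>t. w t * D t 0)) (at 0)"
    unfolding I_def using w psi_cont psi_deriv B by (rule has_real_derivative_weighted_parametric_integral)
  moreover from extremal have "(\<forall>e. I 0 \<le> I e) \<or> (\<forall>e. I e \<le> I 0)"
    unfolding I_def Q_def H_def by (simp flip: zero_prod_def)
  ultimately have "integral {a..b} (\<lambda>t. w t * D t 0) = 0"
    using DERIV_local_min[where f = I and x = 0 and d = 1] DERIV_local_max[where f = I and x = 0 and d = 1]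
    by auto
  then show ?thesis
    unfolding D_def Q_def by simp
qed

section \<open>Bump functions\<close>

lemma has_real_derivative_max_0_square: "((\<lambda>x::real. (max 0 x)\<^sup>2) has_real_derivative 2 * max 0 x) (at x)"
proof (cases x "0 :: real" rule: linorder_cases)
  case less
  have "((\<lambda>x::real. 0) has_real_derivative 2 * max 0 x) (at x)"
    using less by simp
  then show ?thesis
    by (rule has_field_derivative_transform_within_open[where S = "{..<0}"]) (use less in auto)
next
  case equal
  have "(max 0 z)\<^sup>2 - (max 0 x)\<^sup>2 = max 0 z * (z - x)" for z :: real
    using equal by (cases "z \<ge> 0") (auto simp: power2_eq_square)
  then show ?thesis
    using equal by (subst CARAT_DERIV) (auto intro!: exI[of _ "max 0"] continuous_intros)
next
  case greater
  have "((\<lambda>x::real. x\<^sup>2) has_real_derivative 2 * max 0 x) (at x)"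
    using greater by (auto intro!: derivative_eq_intros)
  then show ?thesis
    by (rule has_field_derivative_transform_within_open[where S = "{0<..}"]) (use greater in auto)
qed

definition bump :: "real \<Rightarrow> real \<Rightarrow> real \<Rightarrow> real" where
  "bump c d t = (max 0 ((t - c) * (d - t)))\<^sup>2"

definition bump' :: "real \<Rightarrow> real \<Rightarrow> real \<Rightarrow> real" where
  "bump' c d t = 2 * max 0 ((t - c) * (d - t)) * (c + d - 2 * t)"

lemma has_real_derivative_bump: "(bump c d has_real_derivative bump' c d t) (at t)"
proof -
  have "((\<lambda>t. (t - c) * (d - t)) has_real_derivative (d - t) - (t - c)) (at t)"
    by (auto intro!: derivative_eq_intros)
  from DERIV_chain2[OF has_real_derivative_max_0_square this]
  show ?thesis unfolding bump_def bump'_def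
    by (rule DERIV_cong) (simp add: algebra_simps)
qed

lemma continuous_on_bump: "continuous_on S (bump c d)"
  unfolding bump_def by (intro continuous_intros)

lemma continuous_on_bump': "continuous_on S (bump' c d)"
  unfolding bump'_def by (intro continuous_intros)

lemma bump_nonneg: "0 \<le> bump c d t"
  unfolding bump_def by simp

lemma bump_pos: "c < t \<Longrightarrow> t < d \<Longrightarrow> 0 < bump c d t"
  unfolding bump_def by simp

lemma bump_eq_0:
  assumes "t \<le> c \<or> d \<le> t" "c \<le> d"
  shows "bump c d t = 0" and "bump' c d t = 0"
proof -
  have "(t - c) * (d - t) \<le> 0"
    using assms by (auto intro: mult_nonpos_nonneg mult_nonneg_nonpos)
  then show "bump c d t = 0" "bump' c d t = 0"
    unfolding bump_def bump'_def by simp_all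
qed

lemma integral_eq_integral_subinterval:
  fixes f :: "real \<Rightarrow> real"
  assumes "{c..d} \<subseteq> {a..b}" "\<And>t. t \<in> {a..b} - {c..d} \<Longrightarrow> f t = 0"
  shows "integral {a..b} f = integral {c..d} f"
proof -
  have "integral {a..b} f = integral {a..b} (\<lambda>t. if t \<in> {c..d} then f t else 0)"
    using assms(2) by (intro integral_cong) auto
  also have "\<dots> = integral ({c..d} \<inter> {a..b}) f"
    by (rule integral_restrict_Int)
  also have "{c..d} \<inter> {a..b} = {c..d}"
    using assms(1) by auto
  finally show ?thesis .
qed

lemma integration_by_parts_vanishing_ends:
  fixes f f' eta eta' :: "real \<Rightarrow> real"
  assumes "c \<le> d"
    and f: "\<And>x. x \<in> {c..d} \<Longrightarrow> (f has_real_derivative f' x) (at x)" "continuous_on {c..d} f'"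
    and eta: "\<And>x. x \<in> {c..d} \<Longrightarrow> (eta has_real_derivative eta' x) (at x)" "continuous_on {c..d} eta'"
    and ends: "eta c = 0" "eta d = 0"
  shows "integral {c..d} (\<lambda>x. f x * eta' x) = - integral {c..d} (\<lambda>x. f' x * eta x)"
proof -
  have f_cont: "continuous_on {c..d} f"
    using f(1) by (intro continuous_at_imp_continuous_on ballI DERIV_isCont) auto
  have eta_cont: "continuous_on {c..d} eta"
    using eta(1) by (intro continuous_at_imp_continuous_on ballI DERIV_isCont) auto
  have "((\<lambda>x. f x * eta' x) has_integral integral {c..d} (\<lambda>x. f x * eta' x)) {c..d}"
    using f_cont eta(2) by (intro integrable_integral integrable_continuous_real continuous_intros)
  then have "((\<lambda>x. f' x * eta x) has_integral - integral {c..d} (\<lambda>x. f x * eta' x)) {c..d}"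
    using ends
    by (intro integration_by_parts[OF bounded_bilinear_mult \<open>c \<le> d\<close> f_cont eta_cont])
       (auto simp: has_real_derivative_iff_has_vector_derivative[symmetric] f(1) eta(1))
  then show ?thesis by (simp add: integral_unique)
qed

lemma continuous_vanishes_if_bump_integrals_vanish:
  fixes E :: "real \<Rightarrow> real"
  assumes E: "continuous_on {a<..<b} E"
    and bump_integrals: "\<And>c d. a < c \<Longrightarrow> c < d \<Longrightarrow> d < b \<Longrightarrow> integral {c..d} (\<lambda>t. bump c d t * E t) = 0"
    and t0: "t0 \<in> {a<..<b}"
  shows "E t0 = 0"
proof (rule ccontr)
  assume "E t0 \<noteq> 0"
  moreover have "continuous (at t0 within {a<..<b}) E"
    using E t0 continuous_on_eq_continuous_within by blast
  ultimately obtain r where r: "0 < r"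
    and close: "\<And>t. t \<in> {a<..<b} \<Longrightarrow> dist t t0 < r \<Longrightarrow> dist (E t) (E t0) < \<bar>E t0\<bar>"
    unfolding continuous_within_eps_delta by (metis zero_less_abs_iff)
  have sign: "0 < E t * E t0" if "t \<in> {a<..<b}" "dist t t0 < r" for t
    using close[OF that] \<open>E t0 \<noteq> 0\<close>
    by (cases "E t0 > 0") (auto simp: dist_real_def abs_if zero_less_mult_iff split: if_splits)
  define \<delta> where "\<delta> = min r (min (t0 - a) (b - t0)) / 2"
  have "0 < \<delta>" "\<delta> < r" "\<delta> \<le> (t0 - a) / 2" "\<delta> \<le> (b - t0) / 2"
    using r t0 unfolding \<delta>_def by auto
  then have \<delta>: "0 < \<delta>" "\<delta> < r" "a < t0 - \<delta>" "t0 + \<delta> < b"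
    using t0 by auto
  define c d where "c = t0 - \<delta>" and "d = t0 + \<delta>"
  have nonneg: "0 \<le> bump c d t * E t * E t0" if "t \<in> {c..d}" for t
  proof -
    have "0 < E t * E t0"
      using that \<delta> unfolding c_def d_def by (intro sign) (auto simp: dist_real_def)
    then show ?thesis
      using bump_nonneg[of c d t] by (simp add: mult.assoc)
  qed
  have "integral {c..d} (\<lambda>t. bump c d t * E t * E t0) = 0"
    using bump_integrals[of c d] \<delta> unfolding c_def d_def by simp
  moreover have "continuous_on {c..d} (\<lambda>t. bump c d t * E t * E t0)"
    using \<delta> unfolding c_def d_def
    by (intro continuous_intros continuous_on_bump continuous_on_subset[OF E]) auto
  ultimately have "bump c d t0 * E t0 * E t0 = 0"
    using integral_eq_0_iff[of c d "\<lambda>t. bump c d t * E t * E t0"] nonneg \<delta>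
    unfolding c_def d_def by auto
  moreover have "0 < bump c d t0"
    using \<delta> unfolding c_def d_def by (intro bump_pos) auto
  ultimately show False
    using \<open>E t0 \<noteq> 0\<close> by simp
qed

section \<open>Admissible variations\<close>

definition frac_jet ::
    "real \<Rightarrow> real \<Rightarrow> real \<Rightarrow> (real \<Rightarrow> real) \<Rightarrow> real \<Rightarrow> real \<times> real \<times> real \<times> real" where
  "frac_jet a b beta y t = (t, y t, dI a b y t, caputo a b beta y t)"

lemma C1_on_has_vector_derivative:
  assumes "C1_on a b y" "t \<in> {a..b}"
  shows "(y has_vector_derivative dI a b y t) (at t within {a..b})"
  using assms unfolding C1_on_def dI_def by (simp add: vector_derivative_works)

lemma continuous_on_frac_jet:
  assumes "C1_on a b y" "continuous_on {a..b} (caputo a b beta y)"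
  shows "continuous_on {a..b} (frac_jet a b beta y)"
proof -
  have "continuous_on {a..b} y"
    using assms(1) unfolding C1_on_def
    by (meson continuous_on_eq_continuous_within differentiable_imp_continuous_within)
  then show ?thesis
    using assms unfolding frac_jet_def C1_on_def by (intro continuous_intros) auto
qed

lemma has_vector_derivative_add_scaled:
  assumes "C1_on a b y" "t \<in> {a..b}" "(eta has_real_derivative eta') (at t)"
  shows "((\<lambda>s. y s + e * eta s) has_vector_derivative dI a b y t + e * eta') (at t within {a..b})"
proof -
  have "((\<lambda>s. e * eta s) has_real_derivative e * eta') (at t within {a..b})"
    using has_field_derivative_at_within[OF assms(3)] by (rule DERIV_cmult)
  then have "((\<lambda>s. e * eta s) has_vector_derivative e * eta') (at t within {a..b})"
    by (simp add: has_real_derivative_iff_has_vector_derivative)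
  with C1_on_has_vector_derivative[OF assms(1,2)] show ?thesis
    by (rule has_vector_derivative_add)
qed

lemma dI_add_scaled:
  assumes "a < b" "C1_on a b y" "t \<in> {a..b}" "(eta has_real_derivative eta') (at t)"
  shows "dI a b (\<lambda>s. y s + e * eta s) t = dI a b y t + e * eta'"
  using vector_derivative_within_closed_interval[OF assms(1) _ has_vector_derivative_add_scaled[OF assms(2-4)]]
    assms(3) by (auto simp: dI_def[of a b "\<lambda>s. y s + e * eta s"])

lemma caputo_add_scaled:
  assumes "a < b" "beta < 1" "C1_on a b y" "t \<in> {a..b}"
    and eta: "\<And>t. (eta has_real_derivative eta' t) (at t)" "continuous_on UNIV eta'"
  shows "caputo a b beta (\<lambda>s. y s + e * eta s) t = caputo a b beta y t + e * lRL_int a (1 - beta) eta' t"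
proof -
  have kernel_int: "(\<lambda>\<tau>. (t - \<tau>) powr (1 - beta - 1) * f \<tau>) integrable_on {a..t}"
    if "continuous_on {a..b} f" for f
    using Abel_kernel_times_continuous_absolutely_integrable[of "1 - beta" a b f t] that assms
    by (simp add: absolutely_integrable_on_def)
  have "integral {a..t} (\<lambda>\<tau>. (t - \<tau>) powr (1 - beta - 1) * dI a b (\<lambda>s. y s + e * eta s) \<tau>)
      = integral {a..t} (\<lambda>\<tau>. (t - \<tau>) powr (1 - beta - 1) * dI a b y \<tau> + e * ((t - \<tau>) powr (1 - beta - 1) * eta' \<tau>))"
  proof (rule integral_cong)
    fix \<tau> assume "\<tau> \<in> {a..t}"
    with assms(4) have "\<tau> \<in> {a..b}" by auto
    then show "(t - \<tau>) powr (1 - beta - 1) * dI a b (\<lambda>s. y s + e * eta s) \<tau>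
        = (t - \<tau>) powr (1 - beta - 1) * dI a b y \<tau> + e * ((t - \<tau>) powr (1 - beta - 1) * eta' \<tau>)"
      by (simp add: dI_add_scaled[OF assms(1,3) _ eta(1)] algebra_simps)
  qed
  also have "\<dots> = integral {a..t} (\<lambda>\<tau>. (t - \<tau>) powr (1 - beta - 1) * dI a b y \<tau>)
      + e * integral {a..t} (\<lambda>\<tau>. (t - \<tau>) powr (1 - beta - 1) * eta' \<tau>)"
  proof -
    have "(\<lambda>\<tau>. (t - \<tau>) powr (1 - beta - 1) * dI a b y \<tau>) integrable_on {a..t}"
      using assms(3) unfolding C1_on_def by (intro kernel_int) auto
    moreover have "(\<lambda>\<tau>. e * ((t - \<tau>) powr (1 - beta - 1) * eta' \<tau>)) integrable_on {a..t}"
      by (intro integrable_on_mult_right kernel_int continuous_on_subset[OF eta(2)]) auto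
    ultimately show ?thesis
      by (subst integral_add) auto
  qed
  finally show ?thesis
    unfolding caputo_def lRL_int_def by (simp add: algebra_simps)
qed

lemma continuous_on_lRL_int:
  assumes "0 < mu" "continuous_on UNIV phi" "\<And>\<tau>. \<tau> \<le> a \<Longrightarrow> phi \<tau> = 0"
  shows "continuous_on {a..b} (lRL_int a mu phi)"
  unfolding lRL_int_def using assms by (intro continuous_on_mult_left continuous_on_Abel_integral)

lemma admissible_add_scaled:
  assumes "a < b" "0 < beta" "beta < 1" and y: "admissible a b beta ya yb y"
    and eta: "\<And>t. (eta has_real_derivative eta' t) (at t)" "continuous_on UNIV eta'"
      "\<And>\<tau>. \<tau> \<le> a \<Longrightarrow> eta' \<tau> = 0" "eta a = 0" "eta b = 0"
  shows "admissible a b beta ya yb (\<lambda>s. y s + e * eta s)"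
proof -
  have C1: "C1_on a b y" and caputo_y: "continuous_on {a..b} (caputo a b beta y)"
    using y unfolding admissible_def by auto
  have "continuous_on {a..b} (\<lambda>t. dI a b y t + e * eta' t)"
    using C1 eta(2) unfolding C1_on_def by (intro continuous_intros) (auto intro: continuous_on_subset)
  then have "continuous_on {a..b} (dI a b (\<lambda>s. y s + e * eta s))"
    by (rule continuous_on_eq) (simp add: dI_add_scaled[OF assms(1) C1 _ eta(1)])
  moreover have "continuous_on {a..b} (lRL_int a (1 - beta) eta')"
    using assms(3) eta(2,3) by (intro continuous_on_lRL_int) auto
  then have "continuous_on {a..b} (\<lambda>t. caputo a b beta y t + e * lRL_int a (1 - beta) eta' t)"
    using caputo_y by (intro continuous_intros)
  then have "continuous_on {a..b} (caputo a b beta (\<lambda>s. y s + e * eta s))"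
    by (rule continuous_on_eq) (simp add: caputo_add_scaled[OF assms(1,3) C1 _ eta(1,2)])
  moreover have "(\<lambda>s. y s + e * eta s) differentiable (at t within {a..b})" if "t \<in> {a..b}" for t
    using has_vector_derivative_add_scaled[OF C1 that eta(1)] by (rule differentiableI_vector)
  moreover have "y a + e * eta a = ya" "y b + e * eta b = yb"
    using y eta(4,5) unfolding admissible_def by auto
  ultimately show ?thesis
    unfolding admissible_def C1_on_def by blast
qed

lemma Jfun_add_scaled:
  assumes "a < b" "beta < 1" "C1_on a b y"
    and eta: "\<And>t. (eta has_real_derivative eta' t) (at t)" "continuous_on UNIV eta'"
  shows "Jfun a b alpha beta F (\<lambda>s. y s + e * eta s) = 1 / Gamma alpha * integral {a..b} (\<lambda>t.
    (b - t) powr (alpha - 1) * (\<lambda>(t, x, v, w). F t x v w)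
      (frac_jet a b beta y t + e *\<^sub>R (0, eta t, eta' t, lRL_int a (1 - beta) eta' t)))"
  unfolding Jfun_def lRL_int_def[of a alpha]
  by (intro arg_cong2[where f = "(*)"] refl integral_cong)
    (simp add: frac_jet_def dI_add_scaled[OF assms(1,3) _ eta(1)] caputo_add_scaled[OF assms(1-3) _ eta])

section \<open>The Euler-Lagrange equation\<close>

lemma integral_mult_bump'_by_parts:
  fixes f :: "real \<Rightarrow> real"
  assumes cd: "a < c" "c < d" "d < b"
    and f: "\<forall>t\<in>{a<..<b}. f differentiable (at t)" "continuous_on {a<..<b} (deriv f)"
  shows "integral {a..b} (\<lambda>t. f t * bump' c d t) = - integral {c..d} (\<lambda>t. bump c d t * deriv f t)"
proof -
  have cd_sub: "{c..d} \<subseteq> {a<..<b}" using cd by auto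
  have "integral {a..b} (\<lambda>t. f t * bump' c d t) = integral {c..d} (\<lambda>t. f t * bump' c d t)"
    using cd by (intro integral_eq_integral_subinterval) (auto simp: bump_eq_0)
  also have "\<dots> = - integral {c..d} (\<lambda>t. deriv f t * bump c d t)"
  proof (rule integration_by_parts_vanishing_ends)
    show "(f has_real_derivative deriv f x) (at x)" if "x \<in> {c..d}" for x
      using f(1) cd_sub that by (auto simp: DERIV_deriv_iff_real_differentiable)
    show "continuous_on {c..d} (deriv f)"
      using f(2) cd_sub by (rule continuous_on_subset)
    show "bump c d c = 0" "bump c d d = 0"
      using cd by (auto simp: bump_eq_0)
  qed (use cd in \<open>auto intro: has_real_derivative_bump continuous_on_bump'\<close>)
  finally show ?thesis by (simp add: mult.commute)
qed

locale frac_variational_problem =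
  fixes a b alpha beta ya yb :: real
    and F :: "real \<Rightarrow> real \<Rightarrow> real \<Rightarrow> real \<Rightarrow> real"
    and F1 F2 F3 F4 :: "real \<times> real \<times> real \<times> real \<Rightarrow> real"
    and y :: "real \<Rightarrow> real"
  assumes ab: "a < b"
    and alpha: "0 < alpha"
    and beta: "0 < beta" "beta < 1"
    and F_C1: "\<And>t x v w. t \<in> {a..b} \<Longrightarrow>
        ((\<lambda>(t, x, v, w). F t x v w) has_derivative
          (\<lambda>(h1, h2, h3, h4). F1 (t, x, v, w) * h1 + F2 (t, x, v, w) * h2
                              + F3 (t, x, v, w) * h3 + F4 (t, x, v, w) * h4))
        (at (t, x, v, w) within {a..b} \<times> UNIV)"
    and F_partials_cont: "continuous_on ({a..b} \<times> UNIV) F2" "continuous_on ({a..b} \<times> UNIV) F3"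
        "continuous_on ({a..b} \<times> UNIV) F4"
    and y_adm: "admissible a b beta ya yb y"
    and y_extremal:
        "(\<forall>z. admissible a b beta ya yb z \<longrightarrow> Jfun a b alpha beta F y \<le> Jfun a b alpha beta F z) \<or>
         (\<forall>z. admissible a b beta ya yb z \<longrightarrow> Jfun a b alpha beta F y \<ge> Jfun a b alpha beta F z)"
begin

abbreviation jet :: "real \<Rightarrow> real \<times> real \<times> real \<times> real" where
  "jet \<equiv> frac_jet a b beta y"

abbreviation weight :: "real \<Rightarrow> real" where
  "weight t \<equiv> (b - t) powr (alpha - 1)"

lemma C1_on_y: "C1_on a b y"
  using y_adm by (simp add: admissible_def)

lemma continuous_on_jet: "continuous_on {a..b} jet"
  using y_adm by (intro continuous_on_frac_jet) (auto simp: admissible_def)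

lemma continuous_on_F_jet:
  "continuous_on ({a..b} \<times> UNIV) Fi \<Longrightarrow> continuous_on {a..b} (\<lambda>t. Fi (jet t))"
  by (erule continuous_on_compose2[OF _ continuous_on_jet]) (auto simp: frac_jet_def)

lemma weight_integrable: "weight integrable_on {a..b}"
  using has_integral_Abel_kernel[of alpha a b] alpha ab by auto

lemma weighted_continuous_integrable:
  "continuous_on {a..b} f \<Longrightarrow> (\<lambda>t. weight t * f t) integrable_on {a..b}"
  using absolutely_integrable_nonneg_times_continuous[OF weight_integrable]
  by (simp add: absolutely_integrable_on_def)

lemma Jfun_variation_extremal:
  assumes eta: "\<And>t. (eta has_real_derivative eta' t) (at t)" "continuous_on UNIV eta'"
      "\<And>\<tau>. \<tau> \<le> a \<Longrightarrow> eta' \<tau> = 0" "eta a = 0" "eta b = 0"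
  defines "I \<equiv> \<lambda>e. integral {a..b} (\<lambda>t. weight t * (\<lambda>(t, x, v, w). F t x v w)
      (jet t + e *\<^sub>R (0, eta t, eta' t, lRL_int a (1 - beta) eta' t)))"
  shows "(\<forall>e. I 0 \<le> I e) \<or> (\<forall>e. I e \<le> I 0)"
proof -
  have J: "Jfun a b alpha beta F (\<lambda>s. y s + e * eta s) = 1 / Gamma alpha * I e" for e
    unfolding I_def by (rule Jfun_add_scaled[OF ab beta(2) C1_on_y eta(1,2)])
  have J0: "Jfun a b alpha beta F y = 1 / Gamma alpha * I 0"
    using J[of 0] by simp
  have pos: "0 < 1 / Gamma alpha"
    using alpha by simp
  have "Jfun a b alpha beta F y \<le> Jfun a b alpha beta F (\<lambda>s. y s + e * eta s) \<longleftrightarrow> I 0 \<le> I e"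
    and "Jfun a b alpha beta F (\<lambda>s. y s + e * eta s) \<le> Jfun a b alpha beta F y \<longleftrightarrow> I e \<le> I 0" for e
    unfolding J J0 using pos by (rule mult_le_cancel_left_pos)+
  moreover have "admissible a b beta ya yb (\<lambda>s. y s + e * eta s)" for e
    using ab beta y_adm eta by (rule admissible_add_scaled)
  ultimately show ?thesis
    using y_extremal by blast
qed

lemma first_variation_vanishes:
  assumes eta: "\<And>t. (eta has_real_derivative eta' t) (at t)" "continuous_on UNIV eta'"
      "\<And>\<tau>. \<tau> \<le> a \<Longrightarrow> eta' \<tau> = 0" "eta a = 0" "eta b = 0"
  shows "integral {a..b} (\<lambda>t. weight t * (F2 (jet t) * eta t + F3 (jet t) * eta' t
      + F4 (jet t) * lRL_int a (1 - beta) eta' t)) = 0"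
proof (rule weighted_integral_first_variation_eq_0[OF weight_integrable _ _ F_partials_cont continuous_on_jet])
  show "((\<lambda>(t, x, v, w). F t x v w) has_derivative
      (\<lambda>(k1, k2, k3, k4). F1 q * k1 + F2 q * k2 + F3 q * k3 + F4 q * k4)) (at q within {a..b} \<times> UNIV)"
    if "q \<in> {a..b} \<times> UNIV" for q
    using that F_C1 by (cases q) auto
  show "continuous_on {a..b} eta"
    using eta(1) by (intro continuous_at_imp_continuous_on ballI DERIV_isCont)
  show "continuous_on {a..b} eta'"
    using eta(2) by (rule continuous_on_subset) simp
  show "continuous_on {a..b} (lRL_int a (1 - beta) eta')"
    using beta eta(2,3) by (intro continuous_on_lRL_int) auto
qed (use Jfun_variation_extremal[OF eta] in \<open>simp_all add: frac_jet_def\<close>)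

lemma first_variation_bump:
  assumes cd: "a < c" "c < d" "d < b"
  shows "integral {a..b} (\<lambda>t. weight t * (F2 (jet t) * bump c d t))
      + integral {a..b} (\<lambda>t. weight t * (F3 (jet t) * bump' c d t))
      + integral {a..b} (\<lambda>t. weight t * (F4 (jet t) * lRL_int a (1 - beta) (bump' c d) t)) = 0"
proof -
  have "integral {a..b} (\<lambda>t. weight t * (F2 (jet t) * bump c d t + F3 (jet t) * bump' c d t
      + F4 (jet t) * lRL_int a (1 - beta) (bump' c d) t)) = 0"
  proof (rule first_variation_vanishes)
    show "\<tau> \<le> a \<Longrightarrow> bump' c d \<tau> = 0" "bump c d a = 0" "bump c d b = 0" for \<tau>
      using cd by (auto simp: bump_eq_0)
  qed (rule has_real_derivative_bump continuous_on_bump')+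
  moreover have "(\<lambda>t. weight t * (F2 (jet t) * bump c d t)) integrable_on {a..b}"
    using continuous_on_F_jet[OF F_partials_cont(1)] continuous_on_bump
    by (intro weighted_continuous_integrable continuous_on_mult)
  moreover have "(\<lambda>t. weight t * (F3 (jet t) * bump' c d t)) integrable_on {a..b}"
    using continuous_on_F_jet[OF F_partials_cont(2)] continuous_on_bump'
    by (intro weighted_continuous_integrable continuous_on_mult)
  moreover have "(\<lambda>t. weight t * (F4 (jet t) * lRL_int a (1 - beta) (bump' c d) t)) integrable_on {a..b}"
    using continuous_on_F_jet[OF F_partials_cont(3)] beta cd
    by (intro weighted_continuous_integrable continuous_on_mult continuous_on_lRL_int continuous_on_bump')
      (auto simp: bump_eq_0)
  ultimately show ?thesis
    by (simp add: distrib_left integral_add integrable_add)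
qed

lemma F4_term_fractional_by_parts:
  assumes eta': "continuous_on UNIV eta'"
  shows "integral {a..b} (\<lambda>t. weight t * (F4 (jet t) * lRL_int a (1 - beta) eta' t))
    = integral {a..b} (\<lambda>\<tau>. eta' \<tau> * rRL_int b (1 - beta) (\<lambda>s. weight s * F4 (jet s)) \<tau>)"
proof -
  \<comment> \<open>A continuous extension of F4 along the jet beyond [a, b] makes the weight Borel measurable on the whole line.\<close>
  define G where "G = (\<lambda>t. F4 (jet (max a (min b t))))"
  define g where "g = (\<lambda>t. weight t * G t)"
  have G_cont: "continuous_on UNIV G"
    unfolding G_def using ab
    by (intro continuous_on_compose2[OF continuous_on_F_jet[OF F_partials_cont(3)]])
      (auto intro!: continuous_intros)
  have g_eq: "g t = weight t * F4 (jet t)" if "t \<in> {a..b}" for t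
    using that unfolding g_def G_def by (simp add: max_absorb2 min_absorb2)
  have "g \<in> borel_measurable borel"
    unfolding g_def using borel_measurable_continuous_onI[OF G_cont] by measurable
  moreover have "g absolutely_integrable_on {a..b}"
    unfolding g_def using G_cont
    by (intro absolutely_integrable_nonneg_times_continuous weight_integrable)
      (auto intro: continuous_on_subset)
  ultimately have by_parts: "integral {a..b} (\<lambda>t. g t * lRL_int a (1 - beta) eta' t)
      = integral {a..b} (\<lambda>\<tau>. eta' \<tau> * rRL_int b (1 - beta) g \<tau>)"
    using beta eta' by (intro lRL_int_integration_by_parts) auto
  have rRL_int_g: "rRL_int b (1 - beta) g \<tau> = rRL_int b (1 - beta) (\<lambda>s. weight s * F4 (jet s)) \<tau>"
    if "\<tau> \<in> {a..b}" for \<tau>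
    unfolding rRL_int_def using that by (intro arg_cong2[where f = "(*)"] refl integral_cong) (simp add: g_eq)
  have "integral {a..b} (\<lambda>t. weight t * (F4 (jet t) * lRL_int a (1 - beta) eta' t))
      = integral {a..b} (\<lambda>t. g t * lRL_int a (1 - beta) eta' t)"
    by (intro integral_cong) (simp add: g_eq)
  also note by_parts
  also have "integral {a..b} (\<lambda>\<tau>. eta' \<tau> * rRL_int b (1 - beta) g \<tau>)
      = integral {a..b} (\<lambda>\<tau>. eta' \<tau> * rRL_int b (1 - beta) (\<lambda>s. weight s * F4 (jet s)) \<tau>)"
    by (intro integral_cong) (simp add: rRL_int_g)
  finally show ?thesis .
qed

lemma F4_term_bump:
  assumes cd: "a < c" "c < d" "d < b"
    and g_RL: "\<forall>t\<in>{a<..<b}. rRL_int b (1 - beta) (\<lambda>\<tau>. weight \<tau> * F4 (jet \<tau>)) differentiable (at t)"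
    and g_RL_cont: "continuous_on {a<..<b} (rRL_deriv b beta (\<lambda>\<tau>. weight \<tau> * F4 (jet \<tau>)))"
  shows "integral {a..b} (\<lambda>t. weight t * (F4 (jet t) * lRL_int a (1 - beta) (bump' c d) t))
    = integral {c..d} (\<lambda>t. bump c d t * rRL_deriv b beta (\<lambda>\<tau>. weight \<tau> * F4 (jet \<tau>)) t)"
proof -
  define R where "R = rRL_int b (1 - beta) (\<lambda>\<tau>. weight \<tau> * F4 (jet \<tau>))"
  have deriv_R: "deriv R t = - rRL_deriv b beta (\<lambda>\<tau>. weight \<tau> * F4 (jet \<tau>)) t" for t
    unfolding R_def rRL_deriv_def by simp
  have "integral {a..b} (\<lambda>t. weight t * (F4 (jet t) * lRL_int a (1 - beta) (bump' c d) t))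
      = integral {a..b} (\<lambda>t. R t * bump' c d t)"
    unfolding F4_term_fractional_by_parts[OF continuous_on_bump'] R_def by (simp add: mult.commute)
  also have "\<dots> = - integral {c..d} (\<lambda>t. bump c d t * deriv R t)"
  proof (rule integral_mult_bump'_by_parts[OF cd])
    show "\<forall>t\<in>{a<..<b}. R differentiable (at t)"
      using g_RL unfolding R_def .
    show "continuous_on {a<..<b} (deriv R)"
      unfolding deriv_R using g_RL_cont by (rule continuous_on_minus)
  qed
  finally show ?thesis
    by (simp add: deriv_R)
qed

lemma Euler_Lagrange_integral_bump:
  assumes cd: "a < c" "c < d" "d < b"
    and F3_diff: "\<forall>t\<in>{a<..<b}. (\<lambda>s. weight s * F3 (jet s)) differentiable (at t)"
    and F3_deriv_cont: "continuous_on {a<..<b} (deriv (\<lambda>s. weight s * F3 (jet s)))"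
    and g_RL: "\<forall>t\<in>{a<..<b}. rRL_int b (1 - beta) (\<lambda>\<tau>. weight \<tau> * F4 (jet \<tau>)) differentiable (at t)"
    and g_RL_cont: "continuous_on {a<..<b} (rRL_deriv b beta (\<lambda>\<tau>. weight \<tau> * F4 (jet \<tau>)))"
  shows "integral {c..d} (\<lambda>t. bump c d t * (F2 (jet t) * weight t - deriv (\<lambda>s. F3 (jet s) * weight s) t
      + rRL_deriv b beta (\<lambda>\<tau>. weight \<tau> * F4 (jet \<tau>)) t)) = 0"
proof -
  define h3 where "h3 = (\<lambda>s. weight s * F3 (jet s))"
  define r where "r = rRL_deriv b beta (\<lambda>\<tau>. weight \<tau> * F4 (jet \<tau>))"
  have cd_sub: "{c..d} \<subseteq> {a<..<b}"
    using cd by auto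
  have "integral {a..b} (\<lambda>t. weight t * (F2 (jet t) * bump c d t))
      = integral {c..d} (\<lambda>t. weight t * (F2 (jet t) * bump c d t))"
    using cd by (intro integral_eq_integral_subinterval) (auto simp: bump_eq_0)
  moreover have "integral {a..b} (\<lambda>t. weight t * (F3 (jet t) * bump' c d t))
      = - integral {c..d} (\<lambda>t. bump c d t * deriv h3 t)"
    using integral_mult_bump'_by_parts[OF cd F3_diff F3_deriv_cont] unfolding h3_def by (simp add: ac_simps)
  ultimately have sum_0: "integral {c..d} (\<lambda>t. bump c d t * (F2 (jet t) * weight t))
      - integral {c..d} (\<lambda>t. bump c d t * deriv h3 t) + integral {c..d} (\<lambda>t. bump c d t * r t) = 0"
    using first_variation_bump[OF cd] F4_term_bump[OF cd g_RL g_RL_cont] unfolding r_def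
    by (simp add: ac_simps)
  have "continuous_on {c..d} (\<lambda>t. F2 (jet t) * weight t)"
    using cd by (intro continuous_intros continuous_on_subset[OF continuous_on_F_jet[OF F_partials_cont(1)]]) auto
  moreover have "continuous_on {c..d} (deriv h3)" "continuous_on {c..d} r"
    using continuous_on_subset[OF F3_deriv_cont cd_sub] continuous_on_subset[OF g_RL_cont cd_sub]
    unfolding h3_def r_def .
  ultimately have "integral {c..d} (\<lambda>t. bump c d t * (F2 (jet t) * weight t - deriv h3 t + r t))
      = integral {c..d} (\<lambda>t. bump c d t * (F2 (jet t) * weight t)) - integral {c..d} (\<lambda>t. bump c d t * deriv h3 t)
        + integral {c..d} (\<lambda>t. bump c d t * r t)"
    by (simp add: distrib_left right_diff_distrib integral_add integral_diff integrable_continuous_real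
        continuous_on_mult continuous_on_diff continuous_on_bump)
  moreover have "(\<lambda>s. F3 (jet s) * weight s) = h3"
    unfolding h3_def by (simp add: mult.commute)
  ultimately show ?thesis
    using sum_0 unfolding r_def by simp
qed

end

theorem mainTheorem7:
  fixes a b alpha beta ya yb :: real
    and F :: "real \<Rightarrow> real \<Rightarrow> real \<Rightarrow> real \<Rightarrow> real"
    and F1 F2 F3 F4 :: "real \<times> real \<times> real \<times> real \<Rightarrow> real"
    and y :: "real \<Rightarrow> real"
  assumes ab: "a < b"
    and alpha: "0 < alpha" "alpha < 1"
    and beta: "0 < beta" "beta < 1"
    and F_C1: "\<And>t x v w. t \<in> {a..b} \<Longrightarrow>
        ((\<lambda>(t, x, v, w). F t x v w) has_derivative
          (\<lambda>(h1, h2, h3, h4). F1 (t, x, v, w) * h1 + F2 (t, x, v, w) * h2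
                              + F3 (t, x, v, w) * h3 + F4 (t, x, v, w) * h4))
        (at (t, x, v, w) within {a..b} \<times> UNIV)"
    and F_partials_cont: "continuous_on ({a..b} \<times> UNIV) F1" "continuous_on ({a..b} \<times> UNIV) F2"
        "continuous_on ({a..b} \<times> UNIV) F3" "continuous_on ({a..b} \<times> UNIV) F4"
    and y_adm: "admissible a b beta ya yb y"
    and y_extremal:
        "(\<forall>z. admissible a b beta ya yb z \<longrightarrow> Jfun a b alpha beta F y \<le> Jfun a b alpha beta F z) \<or>
         (\<forall>z. admissible a b beta ya yb z \<longrightarrow> Jfun a b alpha beta F y \<ge> Jfun a b alpha beta F z)"
    and g_RL: "\<forall>t\<in>{a<..<b}. rRL_int b (1 - beta)
                 (\<lambda>\<tau>. (b - \<tau>) powr (alpha - 1) * F4 (\<tau>, y \<tau>, dI a b y \<tau>, caputo a b beta y \<tau>))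
                 differentiable (at t)"
    and g_RL_cont: "continuous_on {a<..<b} (rRL_deriv b beta
                 (\<lambda>\<tau>. (b - \<tau>) powr (alpha - 1) * F4 (\<tau>, y \<tau>, dI a b y \<tau>, caputo a b beta y \<tau>)))"
    and F2_cont: "continuous_on {a<..<b}
                 (\<lambda>t. (b - t) powr (alpha - 1) * F2 (t, y t, dI a b y t, caputo a b beta y t))"
    and F3_diff: "\<forall>t\<in>{a<..<b}.
                 (\<lambda>s. (b - s) powr (alpha - 1) * F3 (s, y s, dI a b y s, caputo a b beta y s))
                 differentiable (at t)"
    and F3_deriv_cont: "continuous_on {a<..<b}
                 (deriv (\<lambda>s. (b - s) powr (alpha - 1) * F3 (s, y s, dI a b y s, caputo a b beta y s)))"
    and F3_AC: "abs_cont_on a b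
                 (\<lambda>t. (b - t) powr (alpha - 1) * F3 (t, y t, dI a b y t, caputo a b beta y t))"
    and g_int_AC: "abs_cont_on a b (rRL_int b (1 - beta)
                 (\<lambda>\<tau>. (b - \<tau>) powr (alpha - 1) * F4 (\<tau>, y \<tau>, dI a b y \<tau>, caputo a b beta y \<tau>)))"
    and kernel_or_cont:
        "((\<lambda>(t, \<tau>). ((t - \<tau>) powr (- beta) / Gamma (1 - beta))\<^sup>2)
              integrable_on {(t, \<tau>). a \<le> \<tau> \<and> \<tau> < t \<and> t \<le> b} \<and>
          (\<lambda>\<tau>. (b - \<tau>) powr (alpha - 1) * F4 (\<tau>, y \<tau>, dI a b y \<tau>, caputo a b beta y \<tau>))
              measurable_on {a..b} \<and>
          (\<lambda>\<tau>. ((b - \<tau>) powr (alpha - 1) * F4 (\<tau>, y \<tau>, dI a b y \<tau>, caputo a b beta y \<tau>))\<^sup>2)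
              integrable_on {a..b})
         \<or> continuous_on {a..b}
              (\<lambda>\<tau>. (b - \<tau>) powr (alpha - 1) * F4 (\<tau>, y \<tau>, dI a b y \<tau>, caputo a b beta y \<tau>))"
  shows "\<forall>t\<in>{a<..<b}.
     F2 (t, y t, dI a b y t, caputo a b beta y t) * (b - t) powr (alpha - 1)
     - deriv (\<lambda>s. F3 (s, y s, dI a b y s, caputo a b beta y s) * (b - s) powr (alpha - 1)) t
     + rRL_deriv b beta
         (\<lambda>\<tau>. (b - \<tau>) powr (alpha - 1) * F4 (\<tau>, y \<tau>, dI a b y \<tau>, caputo a b beta y \<tau>)) t = 0"
proof -
  \<comment> \<open>The test functions are supported inside (a, b).\<close>
  interpret frac_variational_problem a b alpha beta ya yb F F1 F2 F3 F4 y
    by unfold_locales (fact ab alpha(1) beta F_C1 F_partials_cont(2-4) y_adm y_extremal)+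
  let ?E = "\<lambda>t. F2 (t, y t, dI a b y t, caputo a b beta y t) * (b - t) powr (alpha - 1)
     - deriv (\<lambda>s. F3 (s, y s, dI a b y s, caputo a b beta y s) * (b - s) powr (alpha - 1)) t
     + rRL_deriv b beta
         (\<lambda>\<tau>. (b - \<tau>) powr (alpha - 1) * F4 (\<tau>, y \<tau>, dI a b y \<tau>, caputo a b beta y \<tau>)) t"
  have "(\<lambda>s. F3 (s, y s, dI a b y s, caputo a b beta y s) * (b - s) powr (alpha - 1))
      = (\<lambda>s. (b - s) powr (alpha - 1) * F3 (s, y s, dI a b y s, caputo a b beta y s))"
    by (simp add: mult.commute)
  then have "continuous_on {a<..<b} ?E"
    using F2_cont F3_deriv_cont g_RL_cont by (simp add: mult.commute continuous_intros)
  moreover have "integral {c..d} (\<lambda>t. bump c d t * ?E t) = 0" if "a < c" "c < d" "d < b" for c d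
    using Euler_Lagrange_integral_bump[OF that] F3_diff F3_deriv_cont g_RL g_RL_cont
    unfolding frac_jet_def by blast
  ultimately show ?thesis
    using continuous_vanishes_if_bump_integrals_vanish by blast
qed

end
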